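(* For $\alpha,\varepsilon>0$ let $I=(0,\varepsilon)$, $\mathscr{V}=\{\rho\in H^1(I):\rho(0)=0,\ \rho(\varepsilon)=1\}$ and $F_{\alpha,\varepsilon}(\rho)=\int_0^\varepsilon e^{\alpha\ell}|\rho'(\ell)|^2\,\mathrm{d}\ell$ for $\rho\in\mathscr{V}$. Then: (a) the problem $\inf\{F_{\alpha,\varepsilon}(\rho):\rho\in\mathscr{V}\}$ has a unique minimizer, namely $\rho_{\alpha,\varepsilon}(\ell)=\dfrac{1-e^{-\alpha\ell}}{1-e^{-\alpha\varepsilon}}$; (b) $\inf\{F_{\alpha,\varepsilon}(\rho):\rho\in\mathscr{V}\}=\dfrac{\alpha}{1-e^{-\varepsilon\alpha}}$; (c) for every $c_0>0$ there exists $C>0$ such that, whenever $1-e^{-\alpha\varepsilon}\ge c_0$, $$\int_0^\varepsilon e^{\alpha\ell}|\partial_\alpha\rho_{\alpha,\varepsilon}(\ell)|^2\,\mathrm{d}\ell\le C\big(\alpha^{-3}+e^{-\alpha\varepsilon}\varepsilon^2\alpha^{-1}\big).$$ *)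

theory Defs
  imports "HOL-Analysis.Analysis"
begin

text \<open>H^1 on the interval I = (0,eps) in one dimension: a function rho (considered on the
closed interval [0,eps], i.e. its continuous representative) is in H^1(I) with weak
derivative g iff g is in L^2(I) and rho is the integral of g (absolute continuity).\<close>

definition weak_deriv_H1 :: "real \<Rightarrow> (real \<Rightarrow> real) \<Rightarrow> (real \<Rightarrow> real) \<Rightarrow> bool" where
  "weak_deriv_H1 eps rho g \<longleftrightarrow>
     g \<in> borel_measurable lborel \<and>
     set_integrable lborel {0..eps} g \<and>
     set_integrable lborel {0..eps} (\<lambda>t. (g t)\<^sup>2) \<and>
     (\<forall>x\<in>{0..eps}. rho x = rho 0 + (LINT t:{0..x}|lborel. g t))"

definition H1 :: "real \<Rightarrow> (real \<Rightarrow> real) set" where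
  "H1 eps = {rho. \<exists>g. weak_deriv_H1 eps rho g}"

definition admissible :: "real \<Rightarrow> (real \<Rightarrow> real) set" where
  "admissible eps = {rho \<in> H1 eps. rho 0 = 0 \<and> rho eps = 1}"

text \<open>The weak derivative (unique a.e.; any choice gives the same value of F).\<close>
definition wderiv :: "real \<Rightarrow> (real \<Rightarrow> real) \<Rightarrow> (real \<Rightarrow> real)" where
  "wderiv eps rho = (SOME g. weak_deriv_H1 eps rho g)"

definition F :: "real \<Rightarrow> real \<Rightarrow> (real \<Rightarrow> real) \<Rightarrow> real" where
  "F \<alpha> eps rho = (LINT l:{0..eps}|lborel. exp (\<alpha> * l) * (wderiv eps rho l)\<^sup>2)"

definition rho_opt :: "real \<Rightarrow> real \<Rightarrow> real \<Rightarrow> real" where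
  "rho_opt \<alpha> eps l = (1 - exp (- \<alpha> * l)) / (1 - exp (- \<alpha> * eps))"

end

theory Submission
  imports Defs
begin

text \<open>Write \<open>D = 1 - exp (-\<alpha> \<epsilon>)\<close>. The derivative \<open>h\<close> of \<open>rho_opt\<close> satisfies
\<open>exp (\<alpha> l) h l = \<alpha> / D\<close>, so for every admissible \<open>\<rho>\<close> with weak derivative \<open>g\<close>, expanding the square and using
\<open>\<integral> g = \<rho> \<epsilon> - \<rho> 0 = 1 = \<integral> h\<close> gives
\<open>\<integral> exp (\<alpha> l) g\<^sup>2 = \<alpha> / D + \<integral> exp (\<alpha> l) (g - h)\<^sup>2\<close>.
Hence \<open>rho_opt\<close> attains the value \<open>\<alpha> / D\<close>, no admissible function does better, and a
minimizer has \<open>g = h\<close> almost everywhere, so it equals \<open>rho_opt\<close>.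
For (c), \<open>\<partial>\<^sub>\<alpha> rho_opt = l exp (-\<alpha> l) / D - (1 - exp (-\<alpha> l)) \<epsilon> exp (-\<alpha> \<epsilon>) / D\<^sup>2\<close>;
squaring with \<open>(A - B)\<^sup>2 \<le> 2 A\<^sup>2 + 2 B\<^sup>2\<close> and \<open>D \<ge> c\<^sub>0\<close> reduces the claim to
\<open>\<integral>\<^sub>0\<^sup>\<epsilon> l\<^sup>2 exp (-\<alpha> l) \<le> 2 / \<alpha>\<^sup>3\<close> and \<open>\<integral>\<^sub>0\<^sup>\<epsilon> exp (\<alpha> l) \<le> exp (\<alpha> \<epsilon>) / \<alpha>\<close>.\<close>

lemma set_integral_atLeastAtMost_FTC:
  fixes f F :: "real \<Rightarrow> real"
  assumes "a \<le> b"
    and "\<And>x. a \<le> x \<Longrightarrow> x \<le> b \<Longrightarrow> (F has_real_derivative f x) (at x within {a..b})"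
    and "continuous_on {a..b} f"
  shows "(LINT x:{a..b}|lborel. f x) = F b - F a"
  unfolding set_lebesgue_integral_def using assms
  by (intro integral_FTC_atLeastAtMost) (auto simp: has_real_derivative_iff_has_vector_derivative)

lemma set_integral_nonneg:
  fixes f :: "'a \<Rightarrow> real"
  assumes "\<And>x. x \<in> A \<Longrightarrow> 0 \<le> f x"
  shows "0 \<le> (LINT x:A|M. f x)"
  unfolding set_lebesgue_integral_def using assms
  by (intro Bochner_Integration.integral_nonneg) (simp split: split_indicator)

lemma AE_zero_if_set_integrals_greaterThan_zero:
  fixes u :: "real \<Rightarrow> real"
  assumes int: "integrable lborel u" and tail: "\<And>x. (LINT t:{x<..}|lborel. u t) = 0"
  shows "AE x in lborel. u x = 0"
proof -
  define up where "up x = max 0 (u x)" for x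
  define um where "um x = max 0 (- u x)" for x
  have [measurable]: "u \<in> borel_measurable borel" using int by simp
  have ip: "integrable lborel up" and im: "integrable lborel um"
    using int unfolding up_def um_def by auto
  have u_eq: "u x = up x - um x" for x by (auto simp: up_def um_def)
  have nonneg: "0 \<le> up x" "0 \<le> um x" for x by (auto simp: up_def um_def)
  have emeasure_density_eq: "emeasure (density lborel (\<lambda>x. ennreal (f x))) A = ennreal (LINT t:A|lborel. f t)"
    if "A \<in> sets borel" "integrable lborel f" "\<And>x. 0 \<le> f x" for A and f :: "real \<Rightarrow> real"
  proof -
    have [measurable]: "f \<in> borel_measurable borel" using that by simp
    have "emeasure (density lborel (\<lambda>x. ennreal (f x))) A = (\<integral>\<^sup>+ x. ennreal (indicator A x *\<^sub>R f x) \<partial>lborel)"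
      using that by (subst emeasure_density) (auto intro!: nn_integral_cong split: split_indicator)
    also have "\<dots> = ennreal (LINT t:A|lborel. f t)"
      unfolding set_lebesgue_integral_def using that
      by (intro nn_integral_eq_integral integrable_mult_indicator) (auto split: split_indicator)
    finally show ?thesis .
  qed
  have integrable_on_sets: "set_integrable lborel A f" if "A \<in> sets borel" "integrable lborel f" for A and f :: "real \<Rightarrow> real"
    unfolding set_integrable_def using that by (intro integrable_mult_indicator) auto
  \<comment> \<open>The positive and negative parts of \<open>u\<close> have densities agreeing on all rays, hence everywhere.\<close>
  have densities_eq: "density lborel (\<lambda>x. ennreal (up x)) = density lborel (\<lambda>x. ennreal (um x))"
  proof (rule measure_eqI_lessThan)
    fix x :: real
    show "emeasure (density lborel (\<lambda>x. ennreal (up x))) {x<..} < \<infinity>"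
      using emeasure_density_eq[OF _ ip nonneg(1)] by simp
    have "(LINT t:{x<..}|lborel. up t) - (LINT t:{x<..}|lborel. um t) = 0"
      using tail[of x] integrable_on_sets[OF _ ip] integrable_on_sets[OF _ im] by (simp add: u_eq)
    then show "emeasure (density lborel (\<lambda>x. ennreal (up x))) {x<..} = emeasure (density lborel (\<lambda>x. ennreal (um x))) {x<..}"
      using emeasure_density_eq[OF _ ip nonneg(1)] emeasure_density_eq[OF _ im nonneg(2)] by simp
  qed auto
  have "AE x in lborel. up x = um x"
  proof (rule density_unique_real[OF ip im])
    fix A :: "real set" assume A: "A \<in> sets lborel"
    have "ennreal (LINT t:A|lborel. up t) = ennreal (LINT t:A|lborel. um t)"
      using emeasure_density_eq[OF _ ip nonneg(1)] emeasure_density_eq[OF _ im nonneg(2)] A densities_eq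
      by simp
    moreover have "0 \<le> (LINT t:A|lborel. up t)" "0 \<le> (LINT t:A|lborel. um t)"
      using nonneg by (auto intro: set_integral_nonneg)
    ultimately show "(LINT t:A|lborel. up t) = (LINT t:A|lborel. um t)" by simp
  qed
  then show ?thesis by eventually_elim (simp add: u_eq)
qed

lemma AE_zero_on_interval_if_set_integrals_zero:
  fixes d :: "real \<Rightarrow> real"
  assumes int: "set_integrable lborel {a..b} d"
    and zero: "\<And>x. x \<in> {a..b} \<Longrightarrow> (LINT t:{a..x}|lborel. d t) = 0" and "a \<le> b"
  shows "AE x in lborel. x \<in> {a..b} \<longrightarrow> d x = 0"
proof -
  define u where "u t = indicator {a..b} t * d t" for t
  have "AE x in lborel. u x = 0"
  proof (rule AE_zero_if_set_integrals_greaterThan_zero)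
    show "integrable lborel u" using int unfolding set_integrable_def u_def by simp
    fix x :: real
    define m where "m = min x b"
    have sub: "set_integrable lborel {a..m} d"
      by (rule set_integrable_subset[OF int]) (use \<open>a \<le> b\<close> in \<open>auto simp: m_def\<close>)
    have initial_zero: "(LINT t:{a..m}|lborel. d t) = 0"
      using zero[of m] \<open>a \<le> b\<close> by (cases "a \<le> m") (auto simp: m_def set_lebesgue_integral_def)
    have "(LINT t:{x<..}|lborel. u t) = (LBINT t. indicator {a..b} t * d t - indicator {a..m} t * d t)"
      unfolding set_lebesgue_integral_def u_def m_def
      by (intro Bochner_Integration.integral_cong) (auto split: split_indicator)
    also have "\<dots> = (LINT t:{a..b}|lborel. d t) - (LINT t:{a..m}|lborel. d t)"
      using int sub by (simp add: set_integrable_def set_lebesgue_integral_def)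
    also have "\<dots> = 0"
      using zero[of b] initial_zero \<open>a \<le> b\<close> by simp
    finally show "(LINT t:{x<..}|lborel. u t) = 0" .
  qed
  then show ?thesis by eventually_elim (auto simp: u_def)
qed

lemma weak_deriv_H1D:
  assumes "weak_deriv_H1 eps \<rho> g"
  shows "g \<in> borel_measurable borel" "set_integrable lborel {0..eps} g"
    "set_integrable lborel {0..eps} (\<lambda>t. (g t)\<^sup>2)"
    "x \<in> {0..eps} \<Longrightarrow> \<rho> x = \<rho> 0 + (LINT t:{0..x}|lborel. g t)"
  using assms unfolding weak_deriv_H1_def by (simp, blast+)

lemma weak_deriv_H1_AE_unique:
  assumes g: "weak_deriv_H1 eps \<rho> g" and g': "weak_deriv_H1 eps \<rho> g'" and "0 \<le> eps"
  shows "AE x in lborel. x \<in> {0..eps} \<longrightarrow> g x = g' x"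
proof -
  have "AE x in lborel. x \<in> {0..eps} \<longrightarrow> g x - g' x = 0"
  proof (rule AE_zero_on_interval_if_set_integrals_zero)
    show "set_integrable lborel {0..eps} (\<lambda>t. g t - g' t)"
      using weak_deriv_H1D(2)[OF g] weak_deriv_H1D(2)[OF g'] by (rule set_integral_diff)
    fix x assume x: "x \<in> {0..eps}"
    have "set_integrable lborel {0..x} g" "set_integrable lborel {0..x} g'"
      using weak_deriv_H1D(2)[OF g] weak_deriv_H1D(2)[OF g'] x by (auto intro: set_integrable_subset)
    moreover have "\<rho> x = \<rho> 0 + (LINT t:{0..x}|lborel. g t)" "\<rho> x = \<rho> 0 + (LINT t:{0..x}|lborel. g' t)"
      using weak_deriv_H1D(4)[OF g x] weak_deriv_H1D(4)[OF g' x] .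
    ultimately show "(LINT t:{0..x}|lborel. g t - g' t) = 0" by simp
  qed fact
  then show ?thesis by eventually_elim simp
qed

lemma weak_deriv_H1_wderiv:
  assumes "weak_deriv_H1 eps \<rho> g"
  shows "weak_deriv_H1 eps \<rho> (wderiv eps \<rho>)"
  unfolding wderiv_def using assms by (rule someI[where P = "weak_deriv_H1 eps \<rho>"])

lemma F_eq_weak_deriv:
  assumes g: "weak_deriv_H1 eps \<rho> g" and "0 \<le> eps"
  shows "F \<alpha> eps \<rho> = (LINT l:{0..eps}|lborel. exp (\<alpha> * l) * (g l)\<^sup>2)"
  unfolding F_def
proof (rule set_lebesgue_integral_cong_AE)
  have w: "weak_deriv_H1 eps \<rho> (wderiv eps \<rho>)" by (rule weak_deriv_H1_wderiv[OF g])
  note [measurable] = weak_deriv_H1D(1)[OF g] weak_deriv_H1D(1)[OF w]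
  show "(\<lambda>l. exp (\<alpha> * l) * (wderiv eps \<rho> l)\<^sup>2) \<in> borel_measurable lborel"
    "(\<lambda>l. exp (\<alpha> * l) * (g l)\<^sup>2) \<in> borel_measurable lborel"
    by measurable measurable
  show "AE l\<in>{0..eps} in lborel. exp (\<alpha> * l) * (wderiv eps \<rho> l)\<^sup>2 = exp (\<alpha> * l) * (g l)\<^sup>2"
    using weak_deriv_H1_AE_unique[OF w g \<open>0 \<le> eps\<close>] by eventually_elim simp
qed simp

definition rho_opt' :: "real \<Rightarrow> real \<Rightarrow> real \<Rightarrow> real" where
  "rho_opt' \<alpha> eps l = \<alpha> * exp (- \<alpha> * l) / (1 - exp (- \<alpha> * eps))"

lemma continuous_on_rho_opt': "continuous_on S (rho_opt' \<alpha> eps)"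
  unfolding rho_opt'_def divide_inverse by (intro continuous_intros)

lemma borel_measurable_rho_opt' [measurable]: "rho_opt' \<alpha> eps \<in> borel_measurable borel"
  by (intro borel_measurable_continuous_onI continuous_on_rho_opt')

lemma has_real_derivative_rho_opt: "(rho_opt \<alpha> eps has_real_derivative rho_opt' \<alpha> eps l) (at l within S)"
proof -
  have "((\<lambda>l. 1 - exp (- \<alpha> * l)) has_real_derivative \<alpha> * exp (- \<alpha> * l)) (at l within S)"
    by (auto intro!: derivative_eq_intros)
  from DERIV_cdivide[OF this, of "1 - exp (- \<alpha> * eps)"] show ?thesis
    unfolding rho_opt_def[abs_def] rho_opt'_def .
qed

lemma rho_opt_0 [simp]: "rho_opt \<alpha> eps 0 = 0"
  by (simp add: rho_opt_def)

lemma rho_opt_self: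
  assumes "\<alpha> * eps \<noteq> 0"
  shows "rho_opt \<alpha> eps eps = 1"
proof -
  have "exp (- \<alpha> * eps) \<noteq> 1" using assms by simp
  then show ?thesis by (simp add: rho_opt_def)
qed

lemma set_integral_rho_opt': "0 \<le> x \<Longrightarrow> (LINT t:{0..x}|lborel. rho_opt' \<alpha> eps t) = rho_opt \<alpha> eps x"
  using set_integral_atLeastAtMost_FTC[OF _ has_real_derivative_rho_opt continuous_on_rho_opt'] by simp

lemma exp_mult_rho_opt': "exp (\<alpha> * l) * rho_opt' \<alpha> eps l = \<alpha> / (1 - exp (- \<alpha> * eps))"
  by (simp add: rho_opt'_def exp_minus)

lemma weak_deriv_H1_rho_opt: "weak_deriv_H1 eps (rho_opt \<alpha> eps) (rho_opt' \<alpha> eps)"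
  unfolding weak_deriv_H1_def
  by (auto intro!: borel_integrable_atLeastAtMost' continuous_intros continuous_on_rho_opt'
      simp: set_integral_rho_opt')

lemma rho_opt_admissible: "\<alpha> * eps \<noteq> 0 \<Longrightarrow> rho_opt \<alpha> eps \<in> admissible eps"
  using weak_deriv_H1_rho_opt by (auto simp: admissible_def H1_def rho_opt_self)

lemma admissible_set_integral_weak_deriv:
  assumes "\<sigma> \<in> admissible eps" "weak_deriv_H1 eps \<sigma> g" "0 \<le> eps"
  shows "(LINT l:{0..eps}|lborel. g l) = 1"
  using weak_deriv_H1D(4)[OF assms(2), of eps] assms(1,3) by (simp add: admissible_def)

lemma weighted_energy_eq_min_plus_defect:
  fixes \<alpha> eps :: real
  assumes "0 < \<alpha>" "0 < eps" and g: "weak_deriv_H1 eps \<sigma> g"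
    and mass: "(LINT l:{0..eps}|lborel. g l) = 1"
  shows "set_integrable lborel {0..eps} (\<lambda>l. exp (\<alpha> * l) * (g l - rho_opt' \<alpha> eps l)\<^sup>2)"
    and "(LINT l:{0..eps}|lborel. exp (\<alpha> * l) * (g l)\<^sup>2) = \<alpha> / (1 - exp (- \<alpha> * eps))
           + (LINT l:{0..eps}|lborel. exp (\<alpha> * l) * (g l - rho_opt' \<alpha> eps l)\<^sup>2)"
proof -
  define m where "m = \<alpha> / (1 - exp (- \<alpha> * eps))"
  define h where "h = rho_opt' \<alpha> eps"
  note [measurable] = weak_deriv_H1D(1)[OF g]
  have g_int: "set_integrable lborel {0..eps} g" by (rule weak_deriv_H1D(2)[OF g])
  have h_int: "set_integrable lborel {0..eps} h"
    using weak_deriv_H1D(2)[OF weak_deriv_H1_rho_opt] by (simp add: h_def)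
  have h_mass: "(LINT l:{0..eps}|lborel. h l) = 1"
    using set_integral_rho_opt'[of eps] rho_opt_self[of \<alpha> eps] assms(1,2) by (simp add: h_def)
  have weighted_g_int: "set_integrable lborel {0..eps} (\<lambda>l. exp (\<alpha> * l) * (g l)\<^sup>2)"
  proof (rule set_integrable_bound)
    show "set_integrable lborel {0..eps} (\<lambda>l. exp (\<alpha> * eps) * (g l)\<^sup>2)"
      using weak_deriv_H1D(3)[OF g] by simp
    show "set_borel_measurable lborel {0..eps} (\<lambda>l. exp (\<alpha> * l) * (g l)\<^sup>2)"
      unfolding set_borel_measurable_def by measurable
    show "AE l in lborel. l \<in> {0..eps} \<longrightarrow> norm (exp (\<alpha> * l) * (g l)\<^sup>2) \<le> norm (exp (\<alpha> * eps) * (g l)\<^sup>2)"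
      using \<open>0 < \<alpha>\<close> by (auto intro!: mult_right_mono)
  qed
  \<comment> \<open>Since \<open>exp (\<alpha> l) h l = m\<close>, the cross term and the square of \<open>h\<close> are linear in \<open>g\<close> and \<open>h\<close>.\<close>
  have expand: "exp (\<alpha> * l) * (g l - h l)\<^sup>2 = exp (\<alpha> * l) * (g l)\<^sup>2 - 2 * m * g l + m * h l" for l
  proof -
    have "exp (\<alpha> * l) * (g l - h l)\<^sup>2
        = exp (\<alpha> * l) * (g l)\<^sup>2 - 2 * (exp (\<alpha> * l) * h l) * g l + (exp (\<alpha> * l) * h l) * h l"
      by (simp add: power2_eq_square algebra_simps)
    then show ?thesis by (simp add: h_def m_def exp_mult_rho_opt')
  qed
  have "set_integrable lborel {0..eps} (\<lambda>l. exp (\<alpha> * l) * (g l)\<^sup>2 - 2 * m * g l + m * h l)"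
    using weighted_g_int g_int h_int by (intro set_integral_add set_integral_diff set_integrable_mult_right) auto
  then show "set_integrable lborel {0..eps} (\<lambda>l. exp (\<alpha> * l) * (g l - rho_opt' \<alpha> eps l)\<^sup>2)"
    by (simp only: expand flip: h_def)
  have "(LINT l:{0..eps}|lborel. exp (\<alpha> * l) * (g l - h l)\<^sup>2)
      = (LINT l:{0..eps}|lborel. exp (\<alpha> * l) * (g l)\<^sup>2) - 2 * m * (LINT l:{0..eps}|lborel. g l)
        + m * (LINT l:{0..eps}|lborel. h l)"
    using weighted_g_int g_int h_int by (simp add: expand set_integral_add set_integral_diff)
  then show "(LINT l:{0..eps}|lborel. exp (\<alpha> * l) * (g l)\<^sup>2) = \<alpha> / (1 - exp (- \<alpha> * eps))
           + (LINT l:{0..eps}|lborel. exp (\<alpha> * l) * (g l - rho_opt' \<alpha> eps l)\<^sup>2)"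
    using mass h_mass by (simp add: h_def m_def)
qed

lemma F_eq_min_plus_defect:
  fixes \<alpha> eps :: real
  assumes "0 < \<alpha>" "0 < eps" "\<sigma> \<in> admissible eps" and g: "weak_deriv_H1 eps \<sigma> g"
  shows "F \<alpha> eps \<sigma> = \<alpha> / (1 - exp (- \<alpha> * eps))
           + (LINT l:{0..eps}|lborel. exp (\<alpha> * l) * (g l - rho_opt' \<alpha> eps l)\<^sup>2)"
  using F_eq_weak_deriv[OF g] weighted_energy_eq_min_plus_defect(2)[OF assms(1,2) g]
    admissible_set_integral_weak_deriv[OF assms(3) g] assms(2) by simp

lemma F_rho_opt:
  fixes \<alpha> eps :: real
  assumes "0 < \<alpha>" "0 < eps"
  shows "F \<alpha> eps (rho_opt \<alpha> eps) = \<alpha> / (1 - exp (- \<alpha> * eps))"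
  using F_eq_min_plus_defect[OF assms rho_opt_admissible weak_deriv_H1_rho_opt] assms by simp

lemma F_rho_opt_le:
  fixes \<alpha> eps :: real
  assumes "0 < \<alpha>" "0 < eps" "\<sigma> \<in> admissible eps"
  shows "F \<alpha> eps (rho_opt \<alpha> eps) \<le> F \<alpha> eps \<sigma>"
proof -
  obtain g where g: "weak_deriv_H1 eps \<sigma> g"
    using assms(3) by (auto simp: admissible_def H1_def)
  have "0 \<le> (LINT l:{0..eps}|lborel. exp (\<alpha> * l) * (g l - rho_opt' \<alpha> eps l)\<^sup>2)"
    by (rule set_integral_nonneg) simp
  then show ?thesis using F_eq_min_plus_defect[OF assms g] F_rho_opt[OF assms(1,2)] by simp
qed

lemma eq_rho_opt_if_F_le:
  fixes \<alpha> eps :: real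
  assumes "0 < \<alpha>" "0 < eps" and \<rho>: "\<rho> \<in> admissible eps"
    and le: "F \<alpha> eps \<rho> \<le> F \<alpha> eps (rho_opt \<alpha> eps)" and l: "l \<in> {0..eps}"
  shows "\<rho> l = rho_opt \<alpha> eps l"
proof -
  obtain g where g: "weak_deriv_H1 eps \<rho> g"
    using \<rho> by (auto simp: admissible_def H1_def)
  note [measurable] = weak_deriv_H1D(1)[OF g]
  define defect where "defect l = exp (\<alpha> * l) * (g l - rho_opt' \<alpha> eps l)\<^sup>2" for l
  have "(LINT l:{0..eps}|lborel. defect l) = 0"
    using le F_eq_min_plus_defect[OF assms(1-3) g] F_rho_opt[OF assms(1,2)]
      set_integral_nonneg[of "{0..eps}" defect lborel]
    by (simp add: defect_def)
  then have "AE x in lborel. indicator {0..eps} x * defect x = 0"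
    using weighted_energy_eq_min_plus_defect(1)[OF assms(1,2) g
        admissible_set_integral_weak_deriv[OF \<rho> g less_imp_le[OF assms(2)]]]
    unfolding set_lebesgue_integral_def set_integrable_def defect_def
    by (subst (asm) integral_nonneg_eq_0_iff_AE) (auto split: split_indicator)
  then have "AE x in lborel. x \<in> {0..eps} \<longrightarrow> g x = rho_opt' \<alpha> eps x"
    by eventually_elim (auto simp: defect_def split: split_indicator)
  then have "(LINT t:{0..l}|lborel. g t) = (LINT t:{0..l}|lborel. rho_opt' \<alpha> eps t)"
    using l by (intro set_lebesgue_integral_cong_AE) (auto elim!: eventually_mono)
  then show ?thesis
    using weak_deriv_H1D(4)[OF g l] set_integral_rho_opt'[of l] l \<rho> by (simp add: admissible_def)
qed

lemma deriv_rho_opt_param: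
  fixes a e l :: real
  assumes "a * e \<noteq> 0"
  shows "deriv (\<lambda>b. rho_opt b e l) a
    = l * exp (- a * l) / (1 - exp (- a * e)) - (1 - exp (- a * l)) * e * exp (- a * e) / (1 - exp (- a * e))\<^sup>2"
proof (rule DERIV_imp_deriv)
  have D: "1 - exp (- a * e) \<noteq> 0" using assms by simp
  have quotient_rule_form: "(p * D - q * (r * s)) / (D * D) = p / D - q * r * s / D\<^sup>2"
    if "D \<noteq> 0" for p q r s D :: real
    using that by (simp add: field_simps power2_eq_square)
  have "((\<lambda>b. 1 - exp (- b * l)) has_real_derivative l * exp (- a * l)) (at a)"
    "((\<lambda>b. 1 - exp (- b * e)) has_real_derivative e * exp (- a * e)) (at a)"
    by (auto intro!: derivative_eq_intros)
  from DERIV_divide[OF this D] show "((\<lambda>b. rho_opt b e l) has_real_derivative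
      l * exp (- a * l) / (1 - exp (- a * e)) - (1 - exp (- a * l)) * e * exp (- a * e) / (1 - exp (- a * e))\<^sup>2) (at a)"
    unfolding rho_opt_def by (simp only: quotient_rule_form[OF D])
qed

lemma set_integral_sq_mult_exp_neg_le:
  fixes a e :: real
  assumes "0 < a" "0 \<le> e"
  shows "(LINT l:{0..e}|lborel. l\<^sup>2 * exp (- a * l)) \<le> 2 / a ^ 3"
proof -
  define P where "P l = l\<^sup>2 / a + 2 * l / a\<^sup>2 + 2 / a ^ 3" for l
  have "(LINT l:{0..e}|lborel. l\<^sup>2 * exp (- a * l)) = - P e * exp (- a * e) - (- P 0 * exp (- a * 0))"
    by (rule set_integral_atLeastAtMost_FTC)
      (use assms in \<open>auto intro!: derivative_eq_intros continuous_intros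
        simp: P_def field_simps power2_eq_square power3_eq_cube\<close>)
  also have "\<dots> = 2 / a ^ 3 - P e * exp (- a * e)"
    by (simp add: P_def[of 0])
  also have "\<dots> \<le> 2 / a ^ 3"
    using assms by (simp add: P_def)
  finally show ?thesis .
qed

lemma set_integral_exp_le:
  fixes a e :: real
  assumes "0 < a" "0 \<le> e"
  shows "(LINT l:{0..e}|lborel. exp (a * l)) \<le> exp (a * e) / a"
proof -
  have "(LINT l:{0..e}|lborel. exp (a * l)) = exp (a * e) / a - exp (a * 0) / a"
    by (rule set_integral_atLeastAtMost_FTC)
      (use assms in \<open>auto intro!: derivative_eq_intros continuous_intros\<close>)
  then show ?thesis using assms by simp
qed

lemma weighted_sq_deriv_rho_opt_param_le:
  fixes a e c0 l :: real
  assumes "0 < a" "0 < c0" "c0 \<le> 1 - exp (- a * e)" "0 \<le> l"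
  shows "exp (a * l) * (deriv (\<lambda>b. rho_opt b e l) a)\<^sup>2
    \<le> 2 / c0\<^sup>2 * (l\<^sup>2 * exp (- a * l)) + 2 * e\<^sup>2 * (exp (- a * e))\<^sup>2 / c0 ^ 4 * exp (a * l)"
proof -
  define D where "D = 1 - exp (- a * e)"
  define A where "A = l * exp (- a * l) / D"
  define B where "B = (1 - exp (- a * l)) * e * exp (- a * e) / D\<^sup>2"
  have D: "0 < D" "c0 \<le> D" using assms unfolding D_def by linarith+
  then have "a * e \<noteq> 0" by (auto simp: D_def)
  then have deriv_eq: "deriv (\<lambda>b. rho_opt b e l) a = A - B"
    unfolding A_def B_def D_def by (rule deriv_rho_opt_param)
  have "2 * A\<^sup>2 + 2 * B\<^sup>2 - (A - B)\<^sup>2 = (A + B)\<^sup>2" by (simp add: power2_eq_square algebra_simps)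
  then have sq_le: "(A - B)\<^sup>2 \<le> 2 * A\<^sup>2 + 2 * B\<^sup>2" using zero_le_power2[of "A + B"] by linarith
  have A_bound: "exp (a * l) * A\<^sup>2 \<le> l\<^sup>2 * exp (- a * l) / c0\<^sup>2"
  proof -
    have "exp (a * l) * (exp (- a * l))\<^sup>2 = exp (- a * l)"
      by (simp add: power2_eq_square flip: exp_add)
    then have "exp (a * l) * A\<^sup>2 = l\<^sup>2 * exp (- a * l) / D\<^sup>2"
      unfolding A_def by (simp add: power_divide power_mult_distrib algebra_simps)
    also have "\<dots> \<le> l\<^sup>2 * exp (- a * l) / c0\<^sup>2"
      using D assms by (intro divide_left_mono power_mono mult_pos_pos) auto
    finally show ?thesis .
  qed
  have B_bound: "B\<^sup>2 \<le> e\<^sup>2 * (exp (- a * e))\<^sup>2 / c0 ^ 4"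
  proof -
    have "0 \<le> 1 - exp (- a * l)" "1 - exp (- a * l) \<le> 1" using assms by auto
    then have "(1 - exp (- a * l))\<^sup>2 \<le> 1" by (simp add: power_le_one)
    have "B\<^sup>2 = (1 - exp (- a * l))\<^sup>2 * (e\<^sup>2 * (exp (- a * e))\<^sup>2 / D ^ 4)"
      unfolding B_def by (simp add: power_divide power_mult_distrib mult.assoc flip: power_mult)
    also have "\<dots> \<le> e\<^sup>2 * (exp (- a * e))\<^sup>2 / D ^ 4"
      using \<open>(1 - exp (- a * l))\<^sup>2 \<le> 1\<close> by (intro mult_left_le_one_le) auto
    also have "\<dots> \<le> e\<^sup>2 * (exp (- a * e))\<^sup>2 / c0 ^ 4"
      using D assms by (intro divide_left_mono power_mono mult_pos_pos) auto
    finally show ?thesis .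
  qed
  have "exp (a * l) * (deriv (\<lambda>b. rho_opt b e l) a)\<^sup>2 \<le> exp (a * l) * (2 * A\<^sup>2 + 2 * B\<^sup>2)"
    unfolding deriv_eq using sq_le by simp
  also have "\<dots> = 2 * (exp (a * l) * A\<^sup>2) + 2 * B\<^sup>2 * exp (a * l)" by (simp add: algebra_simps)
  also have "\<dots> \<le> 2 * (l\<^sup>2 * exp (- a * l) / c0\<^sup>2) + 2 * (e\<^sup>2 * (exp (- a * e))\<^sup>2 / c0 ^ 4) * exp (a * l)"
    using A_bound B_bound by (intro add_mono mult_left_mono mult_right_mono) auto
  finally show ?thesis by simp
qed

lemma set_integral_weighted_sq_deriv_rho_opt_param_le:
  fixes a e c0 :: real
  assumes "0 < a" "0 < e" "0 < c0" "c0 \<le> 1 - exp (- a * e)"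
  shows "(LINT l:{0..e}|lborel. exp (a * l) * (deriv (\<lambda>b. rho_opt b e l) a)\<^sup>2)
    \<le> (4 / c0\<^sup>2 + 2 / c0 ^ 4) * (a powr (-3) + exp (- a * e) * e\<^sup>2 / a)"
proof -
  define K where "K = 2 * e\<^sup>2 * (exp (- a * e))\<^sup>2 / c0 ^ 4"
  have "a * e \<noteq> 0" using assms by simp
  have integrand_int: "set_integrable lborel {0..e} (\<lambda>l. exp (a * l) * (deriv (\<lambda>b. rho_opt b e l) a)\<^sup>2)"
    unfolding deriv_rho_opt_param[OF \<open>a * e \<noteq> 0\<close>] divide_inverse
    by (intro borel_integrable_atLeastAtMost' continuous_intros)
  have bound_int: "set_integrable lborel {0..e} (\<lambda>l. l\<^sup>2 * exp (- a * l))"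
    "set_integrable lborel {0..e} (\<lambda>l. exp (a * l))"
    by (intro borel_integrable_atLeastAtMost' continuous_intros)+
  have "(LINT l:{0..e}|lborel. exp (a * l) * (deriv (\<lambda>b. rho_opt b e l) a)\<^sup>2)
      \<le> (LINT l:{0..e}|lborel. 2 / c0\<^sup>2 * (l\<^sup>2 * exp (- a * l)) + K * exp (a * l))"
    using integrand_int bound_int weighted_sq_deriv_rho_opt_param_le[OF assms(1,3,4)]
    by (intro set_integral_mono set_integral_add set_integrable_mult_right) (auto simp: K_def)
  also have "\<dots> = 2 / c0\<^sup>2 * (LINT l:{0..e}|lborel. l\<^sup>2 * exp (- a * l)) + K * (LINT l:{0..e}|lborel. exp (a * l))"
    using bound_int by (simp add: set_integral_add)
  also have "\<dots> \<le> 2 / c0\<^sup>2 * (2 / a ^ 3) + K * (exp (a * e) / a)"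
    using set_integral_sq_mult_exp_neg_le[of a e] set_integral_exp_le[of a e] assms
    by (intro add_mono mult_left_mono) (auto simp: K_def)
  also have "\<dots> = 4 / c0\<^sup>2 * a powr (-3) + 2 / c0 ^ 4 * (exp (- a * e) * e\<^sup>2 / a)"
  proof -
    have "(exp (- a * e))\<^sup>2 * exp (a * e) = exp (- a * e)"
      by (simp add: power2_eq_square flip: exp_add)
    moreover have "a powr (-3) = 1 / a ^ 3"
      using assms by (simp add: powr_minus_divide)
    ultimately show ?thesis by (simp add: K_def field_simps)
  qed
  also have "\<dots> \<le> (4 / c0\<^sup>2 + 2 / c0 ^ 4) * (a powr (-3) + exp (- a * e) * e\<^sup>2 / a)"
    using assms by (simp add: algebra_simps)
  finally show ?thesis .
qed

theorem lemmaA1: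
  fixes \<alpha> eps :: real
  assumes "\<alpha> > 0" and "eps > 0"
  shows "(rho_opt \<alpha> eps \<in> admissible eps \<and>
          (\<forall>\<sigma>\<in>admissible eps. F \<alpha> eps (rho_opt \<alpha> eps) \<le> F \<alpha> eps \<sigma>) \<and>
          (\<forall>\<rho>\<in>admissible eps. (\<forall>\<sigma>\<in>admissible eps. F \<alpha> eps \<rho> \<le> F \<alpha> eps \<sigma>)
              \<longrightarrow> (\<forall>l\<in>{0..eps}. \<rho> l = rho_opt \<alpha> eps l)))
       \<and> Inf (F \<alpha> eps ` admissible eps) = \<alpha> / (1 - exp (- eps * \<alpha>))
       \<and> (\<forall>c0>0. \<exists>C>0. \<forall>a e. a > 0 \<longrightarrow> e > 0 \<longrightarrow> 1 - exp (- a * e) \<ge> c0 \<longrightarrow>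
            (LINT l:{0..e}|lborel. exp (a * l) * (deriv (\<lambda>b. rho_opt b e l) a)\<^sup>2)
              \<le> C * (a powr (-3) + exp (- a * e) * e\<^sup>2 / a))"
proof (intro conjI ballI impI allI)
  show adm: "rho_opt \<alpha> eps \<in> admissible eps"
    using assms by (simp add: rho_opt_admissible)
  show minimal: "F \<alpha> eps (rho_opt \<alpha> eps) \<le> F \<alpha> eps \<sigma>" if "\<sigma> \<in> admissible eps" for \<sigma>
    using F_rho_opt_le[OF assms that] .
  show "\<rho> l = rho_opt \<alpha> eps l"
    if "\<rho> \<in> admissible eps" "\<forall>\<sigma>\<in>admissible eps. F \<alpha> eps \<rho> \<le> F \<alpha> eps \<sigma>" "l \<in> {0..eps}" for \<rho> l
    using eq_rho_opt_if_F_le[OF assms that(1) _ that(3)] that(2) adm by blast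
  have "Inf (F \<alpha> eps ` admissible eps) = F \<alpha> eps (rho_opt \<alpha> eps)"
    using adm minimal by (intro cInf_eq_minimum) auto
  then show "Inf (F \<alpha> eps ` admissible eps) = \<alpha> / (1 - exp (- eps * \<alpha>))"
    using F_rho_opt[OF assms] by (simp add: mult.commute)
  show "\<exists>C>0. \<forall>a e. a > 0 \<longrightarrow> e > 0 \<longrightarrow> 1 - exp (- a * e) \<ge> c0 \<longrightarrow>
            (LINT l:{0..e}|lborel. exp (a * l) * (deriv (\<lambda>b. rho_opt b e l) a)\<^sup>2)
              \<le> C * (a powr (-3) + exp (- a * e) * e\<^sup>2 / a)" if "c0 > 0" for c0
    using that set_integral_weighted_sq_deriv_rho_opt_param_le[of _ _ c0]
    by (intro exI[of _ "4 / c0\<^sup>2 + 2 / c0 ^ 4"] conjI add_pos_pos divide_pos_pos) auto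
qed

end
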